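(* Let $P\in\mathbb{R}_+^{n\times n}$ be a stochastic irreducible matrix, $w\in\mathbb{R}^n_+$, $c\in\mathbb{R}^n$, and let $\mathcal X=\{x\in\mathbb{R}^n:\,x=S_0^w(P'x+c)\}$. Let $\pi$ be the unique invariant probability vector of $P$ ($\pi=P'\pi$, $\pi\ge0$, $\mathbbm{1}'\pi=1$; it has positive entries), and, when $\sum_ic_i=0$, let $\nu=\frac12\sum_{k\ge0}\left(\frac{I+P'}{2}\right)^kc$ (a convergent series in that case). Then $\mathcal X$ contains more than one element if and only if $\sum_ic_i=0$ and $$\min_i\left\{\frac{\nu_i}{\pi_i}\right\}+\min_i\left\{\frac{w_i-\nu_i}{\pi_i}\right\}>0.$$ Moreover, in this case, $$\mathcal X=\left\{\nu+\alpha\pi:\,-\min_i\left\{\frac{\nu_i}{\pi_i}\right\}\le\alpha\le\min_i\left\{\frac{w_i-\nu_i}{\pi_i}\right\}\right\}.$$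
   Context: $P$ stochastic: nonnegative with $P\mathbbm{1}=\mathbbm{1}$; irreducible: the directed graph with a link $(i,j)$ whenever $P_{ij}>0$ is strongly connected. $(S_0^w(x))_i=\min\{\max\{x_i,0\},w_i\}$; $P'$ is the transpose. *)

theory Defs
  imports "HOL-Analysis.Analysis"
begin

definition stochastic :: "real^'n^'n \<Rightarrow> bool" where
  "stochastic P \<longleftrightarrow> (\<forall>i j. P $ i $ j \<ge> 0) \<and> P *v (\<chi> i. 1) = (\<chi> i. 1)"

definition irreducible_mat :: "real^'n^'n \<Rightarrow> bool" where
  "irreducible_mat P \<longleftrightarrow> (\<forall>i j. (i, j) \<in> {(a, b). P $ a $ b > 0}\<^sup>*)"

definition sat0 :: "real^'n \<Rightarrow> real^'n \<Rightarrow> real^'n" where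
  "sat0 w x = (\<chi> i. min (max (x $ i) 0) (w $ i))"

definition nu_vec :: "real^'n^'n \<Rightarrow> real^'n \<Rightarrow> real^'n" where
  "nu_vec P c = (1/2) *\<^sub>R (\<Sum>k. (((\<lambda>x. (1/2) *\<^sub>R (x + transpose P *v x)) ^^ k) c))"

end

theory Submission
  imports Defs
begin

text \<open>If \<open>x \<noteq> y\<close> both solve \<open>x = S(P' x + c)\<close>, clipping being 1-Lipschitz and \<open>P'\<close>
  preserving total mass force \<open>x - y\<close> to be \<open>P'\<close>-invariant, hence a nonzero multiple of the
  positive vector \<open>\<pi>\<close>. Then no coordinate of \<open>x\<close> or \<open>y\<close> is clipped, so both solve the
  linear equation \<open>x = P' x + c\<close>. That equation forces \<open>\<Sum> c = 0\<close>, and then its solutions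
  form the line \<open>\<nu> + \<real> \<pi>\<close>: \<open>\<nu>\<close> is one of them because the lazy chain \<open>(I + P')/2\<close>
  is primitive, so some power of it is a strict \<open>l\<^sub>1\<close>-contraction on zero-sum vectors
  and the series defining \<open>\<nu>\<close> converges. The solution set is the part of this line
  inside the box \<open>[0, w]\<close>.\<close>

declare transpose_matrix_vector [simp del]

lemma transpose_mult_vec_nth: "(transpose P *v x) $ i = (\<Sum>j\<in>UNIV. P $ j $ i * x $ j)"
  by (simp add: matrix_vector_mult_def transpose_def)

lemma stochastic_nonneg: "stochastic P \<Longrightarrow> P $ i $ j \<ge> 0"
  by (simp add: stochastic_def)

lemma stochastic_row_sum:
  assumes "stochastic P"
  shows "(\<Sum>j\<in>UNIV. P $ i $ j) = 1"
proof -
  have "(P *v (\<chi> i. 1)) $ i = 1" using assms by (simp add: stochastic_def)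
  then show ?thesis by (simp add: matrix_vector_mult_def)
qed

lemma sum_transpose_mult_stochastic:
  assumes "stochastic P"
  shows "(\<Sum>i\<in>UNIV. (transpose P *v x) $ i) = (\<Sum>i\<in>UNIV. x $ i)"
proof -
  have "(\<Sum>i\<in>UNIV. (transpose P *v x) $ i) = (\<Sum>j\<in>UNIV. \<Sum>i\<in>UNIV. P $ j $ i * x $ j)"
    by (simp add: transpose_mult_vec_nth) (rule sum.swap)
  also have "\<dots> = (\<Sum>j\<in>UNIV. x $ j * (\<Sum>i\<in>UNIV. P $ j $ i))"
    by (simp add: sum_distrib_left mult.commute)
  finally show ?thesis by (simp add: stochastic_row_sum[OF assms])
qed

lemma abs_transpose_mult_le:
  assumes "stochastic P"
  shows "\<bar>(transpose P *v x) $ i\<bar> \<le> (transpose P *v (\<chi> k. \<bar>x $ k\<bar>)) $ i"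
proof -
  have "\<bar>\<Sum>j\<in>UNIV. P $ j $ i * x $ j\<bar> \<le> (\<Sum>j\<in>UNIV. \<bar>P $ j $ i * x $ j\<bar>)" by (rule sum_abs)
  then show ?thesis using assms by (simp add: transpose_mult_vec_nth abs_mult stochastic_nonneg)
qed

lemma invariant_nonneg_vanishes:
  assumes st: "stochastic P" and irr: "irreducible_mat P"
    and nonneg: "\<forall>i. q $ i \<ge> 0" and inv: "q = transpose P *v q" and zero: "q $ i0 = 0"
  shows "q $ j = 0"
proof -
  have "(j, i0) \<in> {(a, b). P $ a $ b > 0}\<^sup>*" using irr by (simp add: irreducible_mat_def)
  then show ?thesis
  proof (induction rule: converse_rtrancl_induct)
    case base
    then show ?case using zero by simp
  next
    case (step a b)
    have "(\<Sum>k\<in>UNIV. P $ k $ b * q $ k) = 0"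
      using step.IH inv transpose_mult_vec_nth[of P q b] by simp
    then have "P $ a $ b * q $ a = 0"
      by (subst (asm) sum_nonneg_eq_0_iff) (auto simp: nonneg stochastic_nonneg[OF st])
    then show ?case using step.hyps(1) by simp
  qed
qed

lemma invariant_distribution_pos:
  assumes st: "stochastic P" and irr: "irreducible_mat P"
    and inv: "\<pi> = transpose P *v \<pi>" and nonneg: "\<forall>i. \<pi> $ i \<ge> 0"
    and total: "(\<Sum>i\<in>UNIV. \<pi> $ i) = 1"
  shows "\<pi> $ i > 0"
proof (rule ccontr)
  assume "\<not> \<pi> $ i > 0"
  then have "\<pi> $ i = 0" using nonneg by (meson antisym not_le)
  then have "\<forall>j. \<pi> $ j = 0" using invariant_nonneg_vanishes[OF st irr nonneg inv] by blast
  then show False using total by simp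
qed

lemma invariant_multiple:
  assumes st: "stochastic P" and irr: "irreducible_mat P"
    and inv_\<pi>: "\<pi> = transpose P *v \<pi>" and pos: "\<forall>i. \<pi> $ i > 0"
    and inv_z: "z = transpose P *v z"
  obtains s where "z = s *\<^sub>R \<pi>"
proof -
  define s where "s = (MIN i. z $ i / \<pi> $ i)"
  have "s \<in> range (\<lambda>i. z $ i / \<pi> $ i)" unfolding s_def by (rule Min_in) auto
  then obtain i0 where i0: "s = z $ i0 / \<pi> $ i0" by auto
  define q where "q = z - s *\<^sub>R \<pi>"
  have nonneg: "\<forall>i. q $ i \<ge> 0"
  proof
    fix i
    have "s \<le> z $ i / \<pi> $ i" unfolding s_def by (rule Min_le) auto
    then show "q $ i \<ge> 0" using pos by (simp add: q_def pos_le_divide_eq)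
  qed
  have "q = transpose P *v q"
    unfolding q_def using inv_\<pi> inv_z
    by (metis matrix_vector_mult_diff_distrib matrix_vector_mult_scaleR)
  moreover have "q $ i0 = 0" using i0 pos[rule_format, of i0] by (simp add: q_def)
  ultimately have "\<forall>j. q $ j = 0" using invariant_nonneg_vanishes[OF st irr nonneg] by blast
  then have "z = s *\<^sub>R \<pi>" by (simp add: q_def vec_eq_iff)
  then show ?thesis by (rule that)
qed

definition lazy_step :: "real^'n^'n \<Rightarrow> real^'n \<Rightarrow> real^'n" where
  "lazy_step P x = (1/2) *\<^sub>R (x + transpose P *v x)"

definition norm1 :: "real^'n \<Rightarrow> real" where
  "norm1 x = (\<Sum>i\<in>UNIV. \<bar>x $ i\<bar>)"

lemma norm1_nonneg: "norm1 x \<ge> 0"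
  by (simp add: norm1_def sum_nonneg)

lemma nu_vec_lazy_step: "nu_vec P c = (1/2) *\<^sub>R (\<Sum>k. (lazy_step P ^^ k) c)"
  by (simp add: nu_vec_def lazy_step_def[abs_def])

lemma lazy_step_nth: "lazy_step P x $ i = (x $ i + (\<Sum>j\<in>UNIV. P $ j $ i * x $ j)) / 2"
  by (simp add: lazy_step_def transpose_mult_vec_nth)

lemma linear_lazy_step: "linear (lazy_step P)"
  by (rule linearI) (simp_all add: lazy_step_def matrix_vector_right_distrib
      matrix_vector_mult_scaleR algebra_simps)

lemma linear_lazy_step_pow: "linear (lazy_step P ^^ k)"
proof (induction k)
  case 0
  show ?case by (simp add: linear_id[unfolded id_def])
next
  case (Suc k)
  show ?case using linear_compose[OF Suc.IH linear_lazy_step] by (simp add: o_def)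
qed

lemma sum_lazy_step:
  assumes "stochastic P"
  shows "(\<Sum>i\<in>UNIV. lazy_step P x $ i) = (\<Sum>i\<in>UNIV. x $ i)"
  using sum_transpose_mult_stochastic[OF assms, of x]
  by (simp add: lazy_step_def sum.distrib flip: sum_divide_distrib)

lemma sum_lazy_step_pow:
  "stochastic P \<Longrightarrow> (\<Sum>i\<in>UNIV. (lazy_step P ^^ k) x $ i) = (\<Sum>i\<in>UNIV. x $ i)"
  by (induction k) (simp_all add: sum_lazy_step)

lemma lazy_step_pow_nonneg:
  assumes "stochastic P" "\<forall>i. x $ i \<ge> 0"
  shows "(lazy_step P ^^ k) x $ i \<ge> 0"
  using assms
  by (induction k arbitrary: i)
     (auto simp: lazy_step_nth stochastic_nonneg intro!: add_nonneg_nonneg sum_nonneg)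

lemma lazy_step_ge_self:
  assumes "stochastic P" "\<forall>i. x $ i \<ge> 0"
  shows "lazy_step P x $ i \<ge> x $ i / 2"
proof -
  have "(\<Sum>j\<in>UNIV. P $ j $ i * x $ j) \<ge> 0"
    using assms by (auto simp: stochastic_nonneg intro!: sum_nonneg)
  then show ?thesis by (simp add: lazy_step_nth)
qed

lemma lazy_step_ge_edge:
  assumes "stochastic P" "\<forall>i. x $ i \<ge> 0"
  shows "lazy_step P x $ i \<ge> P $ a $ i * x $ a / 2"
proof -
  have "P $ a $ i * x $ a \<le> (\<Sum>j\<in>UNIV. P $ j $ i * x $ j)"
    by (rule member_le_sum) (use assms in \<open>auto simp: stochastic_nonneg\<close>)
  then show ?thesis using assms(2)[rule_format, of i] by (simp add: lazy_step_nth)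
qed

lemma norm1_lazy_step_le:
  assumes "stochastic P"
  shows "norm1 (lazy_step P x) \<le> norm1 x"
proof -
  let ?a = "\<chi> k. \<bar>x $ k\<bar>"
  have "\<bar>lazy_step P x $ i\<bar> \<le> (\<bar>x $ i\<bar> + (transpose P *v ?a) $ i) / 2" for i
    using abs_triangle_ineq[of "x $ i" "(transpose P *v x) $ i"] abs_transpose_mult_le[OF assms, of x i]
    by (simp add: lazy_step_def)
  then have "norm1 (lazy_step P x) \<le> (\<Sum>i\<in>UNIV. (\<bar>x $ i\<bar> + (transpose P *v ?a) $ i) / 2)"
    unfolding norm1_def by (rule sum_mono)
  also have "\<dots> = norm1 x"
    using sum_transpose_mult_stochastic[OF assms, of ?a]
    by (simp add: norm1_def sum.distrib flip: sum_divide_distrib)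
  finally show ?thesis .
qed

lemma norm1_lazy_step_pow_le: "stochastic P \<Longrightarrow> norm1 ((lazy_step P ^^ k) x) \<le> norm1 x"
  by (induction k) (auto intro: order_trans[OF norm1_lazy_step_le])

lemma lazy_step_pow_pos:
  assumes st: "stochastic P" and nonneg: "\<forall>k. x $ k \<ge> 0" and pos: "x $ j > 0"
  shows "(j, i) \<in> {(a, b). P $ a $ b > 0} ^^ l \<Longrightarrow> l \<le> d \<Longrightarrow> (lazy_step P ^^ d) x $ i > 0"
proof (induction d arbitrary: i l)
  case 0
  then show ?case using pos by simp
next
  case (Suc d)
  let ?y = "(lazy_step P ^^ d) x"
  have y_nonneg: "\<forall>k. ?y $ k \<ge> 0" using lazy_step_pow_nonneg[OF st nonneg] by blast
  show ?case
  proof (cases l)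
    case 0
    then have "j = i" using Suc.prems(1) by simp
    then have "?y $ i > 0" using Suc.IH[of i 0] by simp
    then show ?thesis using lazy_step_ge_self[OF st y_nonneg, of i] by simp
  next
    case (Suc l')
    then obtain a where "(j, a) \<in> {(a, b). P $ a $ b > 0} ^^ l'" and "P $ a $ i > 0"
      using Suc.prems(1) by (auto elim: relpow_Suc_E)
    moreover have "l' \<le> d" using Suc Suc.prems(2) by simp
    ultimately have "P $ a $ i * ?y $ a > 0" using Suc.IH by simp
    then show ?thesis using lazy_step_ge_edge[OF st y_nonneg, where i = i and a = a] by simp
  qed
qed

lemma lazy_step_pow_eventually_pos:
  assumes st: "stochastic P" and irr: "irreducible_mat P"
  obtains m where "m > 0" and "\<And>i j. (lazy_step P ^^ m) (axis j 1 :: real^'n) $ i > 0"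
proof -
  define R where "R = {(a, b). P $ a $ b > 0}"
  have "\<forall>i j. \<exists>l. (j, i) \<in> R ^^ l"
    using irr unfolding irreducible_mat_def R_def by (simp add: rtrancl_power)
  then obtain L where L: "\<And>i j. (j, i) \<in> R ^^ L i j" by metis
  define m where "m = Suc (MAX p. L (fst p) (snd p))"
  have "(lazy_step P ^^ m) (axis j 1 :: real^'n) $ i > 0" for i j
  proof (rule lazy_step_pow_pos[OF st _ _ L[of j i, unfolded R_def]])
    show "L i j \<le> m"
      unfolding m_def using Max_ge[of _ "L i j"] by (auto intro!: le_SucI Max_ge image_eqI[where x="(i, j)"])
  qed (simp_all add: axis_def)
  then show ?thesis using that[of m] by (simp add: m_def)
qed

lemma linear_positive_minorization:
  fixes F :: "real^'n \<Rightarrow> real^'n"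
  assumes lin: "linear F" and pos: "\<And>i j. F (axis j 1) $ i > 0"
  obtains \<delta> where "\<delta> > 0" and "\<And>g i. \<forall>k. g $ k \<ge> 0 \<Longrightarrow> F g $ i \<ge> \<delta> * (\<Sum>j\<in>UNIV. g $ j)"
proof -
  define \<delta> where "\<delta> = (MIN p. F (axis (snd p) 1) $ fst p)"
  have "\<delta> \<in> range (\<lambda>p. F (axis (snd p) 1) $ fst p)" unfolding \<delta>_def by (rule Min_in) auto
  then have \<delta>_pos: "\<delta> > 0" using pos by auto
  have \<delta>_le: "\<delta> \<le> F (axis j 1) $ i" for i j
    unfolding \<delta>_def by (rule Min_le) (auto intro: image_eqI[where x="(i, j)"])
  have minor: "F g $ i \<ge> \<delta> * (\<Sum>j\<in>UNIV. g $ j)" if g: "\<forall>k. g $ k \<ge> 0" for g i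
  proof -
    have "F g = F (\<Sum>j\<in>UNIV. g $ j *\<^sub>R axis j 1)"
      using basis_expansion[of g] by (simp add: scalar_mult_eq_scaleR)
    also have "\<dots> = (\<Sum>j\<in>UNIV. g $ j *\<^sub>R F (axis j 1))"
      by (simp add: linear_sum[OF lin] linear_scale[OF lin])
    finally have "F g $ i = (\<Sum>j\<in>UNIV. g $ j * F (axis j 1) $ i)" by simp
    moreover have "(\<Sum>j\<in>UNIV. g $ j * \<delta>) \<le> (\<Sum>j\<in>UNIV. g $ j * F (axis j 1) $ i)"
      by (rule sum_mono) (use g \<delta>_le in \<open>simp add: mult_left_mono\<close>)
    ultimately show ?thesis by (simp add: sum_distrib_left mult.commute)
  qed
  show ?thesis using minor by (rule that[OF \<delta>_pos])
qed

text \<open>Split \<open>z\<close> into its positive and negative parts, which have the same mass \<open>s\<close>;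
  the images of both parts are entrywise at least \<open>\<delta> s\<close>, so these lower bounds cancel in \<open>F z\<close>.\<close>
lemma norm1_contraction_zero_sum:
  fixes F :: "real^'n \<Rightarrow> real^'n"
  assumes lin: "linear F" and \<delta>_pos: "\<delta> > 0"
    and minor: "\<And>g i. \<forall>k. g $ k \<ge> 0 \<Longrightarrow> F g $ i \<ge> \<delta> * (\<Sum>j\<in>UNIV. g $ j)"
    and sum_F: "\<And>x. (\<Sum>i\<in>UNIV. F x $ i) = (\<Sum>i\<in>UNIV. x $ i)"
    and zero_sum: "(\<Sum>i\<in>UNIV. z $ i) = 0"
  shows "norm1 (F z) \<le> (1 - \<delta>) * norm1 z"
proof -
  define zp :: "real^'n" where "zp = (\<chi> i. max (z $ i) 0)"
  define zm :: "real^'n" where "zm = (\<chi> i. max (- z $ i) 0)"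
  define s where "s = (\<Sum>i\<in>UNIV. zp $ i)"
  have z_eq: "z = zp - zm" by (auto simp: vec_eq_iff zp_def zm_def)
  have zp_nonneg: "\<forall>i. zp $ i \<ge> 0" and zm_nonneg: "\<forall>i. zm $ i \<ge> 0"
    by (auto simp: zp_def zm_def)
  have "(\<Sum>i\<in>UNIV. z $ i) = (\<Sum>i\<in>UNIV. zp $ i) - (\<Sum>i\<in>UNIV. zm $ i)"
    by (subst z_eq) (simp add: sum_subtractf)
  then have mass_zm: "(\<Sum>i\<in>UNIV. zm $ i) = s" using zero_sum by (simp add: s_def)
  have "s \<ge> 0" unfolding s_def using zp_nonneg by (simp add: sum_nonneg)
  have norm1_z: "norm1 z = 2 * s"
  proof -
    have "norm1 z = (\<Sum>i\<in>UNIV. zp $ i + zm $ i)"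
      unfolding norm1_def by (rule sum.cong) (auto simp: zp_def zm_def)
    then show ?thesis using mass_zm by (simp add: sum.distrib s_def)
  qed
  have Fz: "F z = F zp - F zm" by (subst z_eq) (simp add: linear_diff[OF lin])
  have "F zp $ i \<ge> \<delta> * s" "F zm $ i \<ge> \<delta> * s" for i
    using minor zp_nonneg zm_nonneg mass_zm unfolding s_def by metis+
  then have "norm1 (F z) \<le> (\<Sum>i\<in>UNIV. (F zp $ i - \<delta> * s) + (F zm $ i - \<delta> * s))"
    unfolding norm1_def by (intro sum_mono) (auto simp: Fz abs_le_iff)
  also have "\<dots> = 2 * s - real CARD('n) * (2 * \<delta> * s)"
    using sum_F[of zp] sum_F[of zm] mass_zm by (simp add: sum.distrib sum_subtractf s_def)
  also have "\<dots> \<le> 2 * s - 1 * (2 * \<delta> * s)"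
    using \<delta>_pos \<open>s \<ge> 0\<close> by (intro diff_left_mono mult_right_mono) (simp_all add: Suc_le_eq)
  also have "\<dots> = (1 - \<delta>) * norm1 z" using norm1_z by (simp add: algebra_simps)
  finally show ?thesis .
qed

lemma summable_power_div:
  fixes r :: real
  assumes r: "0 < r" "r < 1" and m: "m > 0"
  shows "summable (\<lambda>k. r ^ (k div m))"
proof (rule summable_comparison_test)
  define \<rho> where "\<rho> = root m r"
  have \<rho>: "0 < \<rho>" "\<rho> < 1" "\<rho> ^ m = r"
    using r m by (simp_all add: \<rho>_def real_root_pow_pos2)
  have "r ^ (k div m) \<le> \<rho> ^ k / r" for k
  proof -
    have "\<rho> ^ k = \<rho> ^ (k mod m) * r ^ (k div m)"
      by (metis \<rho>(3) power_add power_mult mod_mult_div_eq)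
    moreover have "\<rho> ^ m \<le> \<rho> ^ (k mod m)"
      by (rule power_decreasing) (use m \<rho> in auto)
    ultimately show ?thesis
      using \<rho> r by (simp add: field_simps mult_right_mono)
  qed
  then show "\<exists>N. \<forall>k\<ge>N. norm (r ^ (k div m)) \<le> 1 / r * \<rho> ^ k"
    using r by auto
  show "summable (\<lambda>k. 1 / r * \<rho> ^ k)"
    using \<rho> by (intro summable_mult summable_geometric) simp
qed

lemma summable_lazy_step_iter:
  assumes st: "stochastic P" and irr: "irreducible_mat P"
    and zero_sum: "(\<Sum>i\<in>UNIV. c $ i) = 0"
  shows "summable (\<lambda>k. (lazy_step P ^^ k) (c :: real^'n))"
proof -
  obtain m where "m > 0" and pos: "\<And>i j. (lazy_step P ^^ m) (axis j 1 :: real^'n) $ i > 0"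
    using lazy_step_pow_eventually_pos[OF st irr] by blast
  obtain \<delta> where "\<delta> > 0" and minor:
    "\<And>g i. \<forall>k. g $ k \<ge> 0 \<Longrightarrow> (lazy_step P ^^ m) g $ i \<ge> \<delta> * (\<Sum>j\<in>UNIV. g $ j)"
    using linear_positive_minorization[OF linear_lazy_step_pow pos] by blast
  define r where "r = 1 / (1 + \<delta>)"
  have r: "0 < r" "r < 1" "1 - \<delta> \<le> r" using \<open>\<delta> > 0\<close> by (simp_all add: r_def field_simps)
  have blocks: "norm1 ((lazy_step P ^^ (q * m)) c) \<le> r ^ q * norm1 c" for q
  proof (induction q)
    case 0
    then show ?case by simp
  next
    case (Suc q)
    let ?z = "(lazy_step P ^^ (q * m)) c"
    have "norm1 ((lazy_step P ^^ m) ?z) \<le> (1 - \<delta>) * norm1 ?z"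
      by (rule norm1_contraction_zero_sum[OF linear_lazy_step_pow \<open>\<delta> > 0\<close> minor])
         (simp_all add: sum_lazy_step_pow[OF st] zero_sum)
    also have "\<dots> \<le> r * (r ^ q * norm1 c)"
      by (rule mult_mono) (use Suc.IH r norm1_nonneg in auto)
    finally show ?case by (simp add: funpow_add)
  qed
  have bound: "norm ((lazy_step P ^^ k) c) \<le> norm1 c * r ^ (k div m)" for k
  proof -
    have "k = k mod m + k div m * m" by simp
    then have "(lazy_step P ^^ k) c = (lazy_step P ^^ (k mod m)) ((lazy_step P ^^ (k div m * m)) c)"
      by (metis funpow_add o_apply)
    then have "norm1 ((lazy_step P ^^ k) c) \<le> norm1 ((lazy_step P ^^ (k div m * m)) c)"
      by (simp add: norm1_lazy_step_pow_le[OF st])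
    then show ?thesis
      using norm_le_l1_cart[of "(lazy_step P ^^ k) c"] blocks[of "k div m"]
      by (simp add: norm1_def mult.commute)
  qed
  show ?thesis
  proof (rule summable_comparison_test)
    show "\<exists>N. \<forall>k\<ge>N. norm ((lazy_step P ^^ k) c) \<le> norm1 c * r ^ (k div m)"
      using bound by blast
    show "summable (\<lambda>k. norm1 c * r ^ (k div m))"
      by (rule summable_mult) (rule summable_power_div[OF r(1,2) \<open>m > 0\<close>])
  qed
qed

lemma nu_vec_solves_linear:
  assumes st: "stochastic P" and irr: "irreducible_mat P"
    and zero_sum: "(\<Sum>i\<in>UNIV. c $ i) = 0"
  shows "nu_vec P c = transpose P *v nu_vec P c + c"
proof -
  define S where "S = (\<Sum>k. (lazy_step P ^^ k) c)"
  have sums: "summable (\<lambda>k. (lazy_step P ^^ k) c)"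
    by (rule summable_lazy_step_iter[OF st irr zero_sum])
  have "lazy_step P S = (\<Sum>k. lazy_step P ((lazy_step P ^^ k) c))" unfolding S_def
    by (rule bounded_linear.suminf[OF _ sums])
       (simp add: linear_conv_bounded_linear[symmetric] linear_lazy_step)
  also have "\<dots> = (\<Sum>k. (lazy_step P ^^ Suc k) c)" by simp
  also have "\<dots> = S - c" unfolding S_def by (subst suminf_split_head[OF sums]) simp
  finally have "transpose P *v S = S - 2 *\<^sub>R c"
    by (simp add: lazy_step_def vec_eq_iff field_simps)
  then show ?thesis unfolding nu_vec_lazy_step S_def[symmetric]
    by (simp add: matrix_vector_mult_scaleR vec_eq_iff field_simps)
qed

lemma sat0_nth: "sat0 w x $ i = min (max (x $ i) 0) (w $ i)"
  by (simp add: sat0_def)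

lemma sat0_eq_self_iff:
  assumes "\<forall>i. w $ i \<ge> 0"
  shows "sat0 w x = x \<longleftrightarrow> (\<forall>i. 0 \<le> x $ i \<and> x $ i \<le> w $ i)"
proof -
  have "min (max a 0) b = a \<longleftrightarrow> 0 \<le> a \<and> a \<le> b" if "0 \<le> b" for a b :: real
    using that by (auto simp: min_def max_def)
  then show ?thesis using assms by (simp add: vec_eq_iff sat0_nth)
qed

lemma clip_diff_abs_le: "\<bar>min (max (u::real) 0) w - min (max v 0) w\<bar> \<le> \<bar>u - v\<bar>"
  by (auto simp: min_def max_def abs_if)

lemma clip_diff_eq_if_abs_eq:
  "\<bar>min (max (u::real) 0) w - min (max v 0) w\<bar> = \<bar>u - v\<bar> \<Longrightarrow>
   min (max u 0) w - min (max v 0) w = u - v"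
  by (auto simp: min_def max_def abs_if split: if_splits)

lemma clip_eq_if_diff_eq:
  "(w::real) \<ge> 0 \<Longrightarrow> min (max u 0) w - min (max v 0) w = u - v \<Longrightarrow> u \<noteq> v \<Longrightarrow>
   min (max u 0) w = u"
  by (auto simp: min_def max_def split: if_splits)

lemma sat0_solutions_diff_invariant:
  assumes st: "stochastic P"
    and x: "x = sat0 w (transpose P *v x + c)" and y: "y = sat0 w (transpose P *v y + c)"
  shows "x - y = transpose P *v (x - y)"
proof -
  define u where "u = transpose P *v x + c"
  define v where "v = transpose P *v y + c"
  define d where "d = x - y"
  have d_nth: "d $ i = min (max (u $ i) 0) (w $ i) - min (max (v $ i) 0) (w $ i)" for i
    using x y by (simp add: d_def u_def v_def vec_eq_iff sat0_nth flip: u_def v_def)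
  have uv: "u $ i - v $ i = (transpose P *v d) $ i" for i
    by (simp add: u_def v_def d_def matrix_vector_mult_diff_distrib)
  have le1: "\<bar>d $ i\<bar> \<le> \<bar>(transpose P *v d) $ i\<bar>" for i
    using clip_diff_abs_le[of "u $ i" "w $ i" "v $ i"] by (simp add: d_nth uv)
  have le2: "\<bar>(transpose P *v d) $ i\<bar> \<le> (transpose P *v (\<chi> k. \<bar>d $ k\<bar>)) $ i" for i
    by (rule abs_transpose_mult_le[OF st])
  have le: "\<bar>d $ i\<bar> \<le> (transpose P *v (\<chi> k. \<bar>d $ k\<bar>)) $ i" for i
    using le1 le2 by (rule order_trans)
  have "\<bar>d $ i\<bar> = (transpose P *v (\<chi> k. \<bar>d $ k\<bar>)) $ i" for i
  proof (rule sum_mono_inv[where I = UNIV and f = "\<lambda>i. \<bar>d $ i\<bar>"])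
    show "(\<Sum>i\<in>UNIV. \<bar>d $ i\<bar>) = (\<Sum>i\<in>UNIV. (transpose P *v (\<chi> k. \<bar>d $ k\<bar>)) $ i)"
      using sum_transpose_mult_stochastic[OF st, of "\<chi> k. \<bar>d $ k\<bar>"] by simp
  qed (use le in simp_all)
  then have "\<bar>d $ i\<bar> = \<bar>(transpose P *v d) $ i\<bar>" for i using le1 le2 by (metis antisym)
  then have "d $ i = (transpose P *v d) $ i" for i
    using clip_diff_eq_if_abs_eq[of "u $ i" "w $ i" "v $ i"] by (simp add: d_nth uv)
  then show ?thesis by (simp add: d_def vec_eq_iff)
qed

lemma sat0_distinct_solutions_unclipped:
  assumes st: "stochastic P" and irr: "irreducible_mat P" and w: "\<forall>i. w $ i \<ge> 0"
    and inv: "\<pi> = transpose P *v \<pi>" and pos: "\<forall>i. \<pi> $ i > 0"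
    and x: "x = sat0 w (transpose P *v x + c)" and y: "y = sat0 w (transpose P *v y + c)"
    and "x \<noteq> y"
  shows "x = transpose P *v x + c"
proof -
  define u where "u = transpose P *v x + c"
  define v where "v = transpose P *v y + c"
  have d_inv: "x - y = transpose P *v (x - y)" by (rule sat0_solutions_diff_invariant[OF st x y])
  then obtain s where s: "x - y = s *\<^sub>R \<pi>" using invariant_multiple[OF st irr inv pos] by blast
  with \<open>x \<noteq> y\<close> have "s \<noteq> 0" by auto
  have "x $ i = u $ i" for i
  proof -
    have "u $ i - v $ i = x $ i - y $ i"
      using d_inv by (simp add: u_def v_def vec_eq_iff matrix_vector_mult_diff_distrib)
    moreover have "x $ i - y $ i \<noteq> 0"
      using s \<open>s \<noteq> 0\<close> pos[rule_format, of i] by (simp add: vec_eq_iff)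
    moreover have "x $ i = min (max (u $ i) 0) (w $ i)" "y $ i = min (max (v $ i) 0) (w $ i)"
      using x y by (simp_all add: u_def v_def vec_eq_iff sat0_nth flip: u_def v_def)
    ultimately show ?thesis using clip_eq_if_diff_eq[of "w $ i" "u $ i" "v $ i"] w by auto
  qed
  then show ?thesis by (simp add: u_def vec_eq_iff)
qed

lemma sum_zero_if_solves_linear:
  assumes "stochastic P" and "x = transpose P *v x + c"
  shows "(\<Sum>i\<in>UNIV. c $ i) = 0"
proof -
  have "(\<Sum>i\<in>UNIV. x $ i) = (\<Sum>i\<in>UNIV. (transpose P *v x) $ i + c $ i)"
    by (subst assms(2)) simp
  then show ?thesis by (simp add: sum.distrib sum_transpose_mult_stochastic[OF assms(1)])
qed

lemma solves_linear_iff_on_line: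
  assumes st: "stochastic P" and irr: "irreducible_mat P"
    and inv: "\<pi> = transpose P *v \<pi>" and pos: "\<forall>i. \<pi> $ i > 0"
    and zero_sum: "(\<Sum>i\<in>UNIV. c $ i) = 0"
  shows "x = transpose P *v x + c \<longleftrightarrow> (\<exists>\<alpha>. x = nu_vec P c + \<alpha> *\<^sub>R \<pi>)"
proof -
  have "nu_vec P c = transpose P *v nu_vec P c + c" by (rule nu_vec_solves_linear[OF st irr zero_sum])
  then have \<nu>: "transpose P *v nu_vec P c = nu_vec P c - c" by (simp add: algebra_simps)
  have "x = transpose P *v x + c \<longleftrightarrow> x - nu_vec P c = transpose P *v (x - nu_vec P c)"
    by (simp add: vec_eq_iff matrix_vector_mult_diff_distrib \<nu> algebra_simps)
  also have "\<dots> \<longleftrightarrow> (\<exists>\<alpha>. x - nu_vec P c = \<alpha> *\<^sub>R \<pi>)"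
    using invariant_multiple[OF st irr inv pos] inv
    by (metis matrix_vector_mult_scaleR)
  finally show ?thesis by (auto simp: algebra_simps)
qed

lemma ray_in_box_iff:
  fixes \<nu> \<pi> w :: "real^'n"
  assumes pos: "\<forall>i. \<pi> $ i > 0"
  shows "(\<forall>i. 0 \<le> (\<nu> + \<alpha> *\<^sub>R \<pi>) $ i \<and> (\<nu> + \<alpha> *\<^sub>R \<pi>) $ i \<le> w $ i) \<longleftrightarrow>
    - (MIN i. \<nu> $ i / \<pi> $ i) \<le> \<alpha> \<and> \<alpha> \<le> (MIN i. (w $ i - \<nu> $ i) / \<pi> $ i)"
proof -
  have lower: "0 \<le> \<nu> $ i + \<alpha> * \<pi> $ i \<longleftrightarrow> - \<alpha> \<le> \<nu> $ i / \<pi> $ i"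
    and upper: "\<nu> $ i + \<alpha> * \<pi> $ i \<le> w $ i \<longleftrightarrow> \<alpha> \<le> (w $ i - \<nu> $ i) / \<pi> $ i" for i
    using pos[rule_format, of i] by (auto simp: pos_le_divide_eq)
  have "- (MIN i. \<nu> $ i / \<pi> $ i) \<le> \<alpha> \<longleftrightarrow> (\<forall>i. - \<alpha> \<le> \<nu> $ i / \<pi> $ i)"
    by (simp add: minus_le_iff)
  moreover have "\<alpha> \<le> (MIN i. (w $ i - \<nu> $ i) / \<pi> $ i) \<longleftrightarrow> (\<forall>i. \<alpha> \<le> (w $ i - \<nu> $ i) / \<pi> $ i)"
    by simp
  ultimately show ?thesis
    by (simp only: vector_add_component vector_scaleR_component real_scaleR_def lower upper) blast
qed

lemma segment_nontrivial_iff: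
  fixes \<nu> \<pi> :: "'a::real_vector"
  assumes "\<pi> \<noteq> 0"
  shows "(\<exists>x\<in>{\<nu> + \<alpha> *\<^sub>R \<pi> | \<alpha>. a \<le> \<alpha> \<and> \<alpha> \<le> b}. \<exists>y\<in>{\<nu> + \<alpha> *\<^sub>R \<pi> | \<alpha>. a \<le> \<alpha> \<and> \<alpha> \<le> b}. x \<noteq> y)
    \<longleftrightarrow> a < b"
proof
  assume "\<exists>x\<in>{\<nu> + \<alpha> *\<^sub>R \<pi> | \<alpha>. a \<le> \<alpha> \<and> \<alpha> \<le> b}. \<exists>y\<in>{\<nu> + \<alpha> *\<^sub>R \<pi> | \<alpha>. a \<le> \<alpha> \<and> \<alpha> \<le> b}. x \<noteq> y"
  then obtain \<alpha> \<beta> where "a \<le> \<alpha>" "\<alpha> \<le> b" "a \<le> \<beta>" "\<beta> \<le> b" "\<alpha> \<noteq> \<beta>" by auto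
  then show "a < b" by linarith
next
  assume "a < b"
  then have "\<nu> + a *\<^sub>R \<pi> \<noteq> \<nu> + b *\<^sub>R \<pi>" using assms by simp
  with \<open>a < b\<close> show "\<exists>x\<in>{\<nu> + \<alpha> *\<^sub>R \<pi> | \<alpha>. a \<le> \<alpha> \<and> \<alpha> \<le> b}. \<exists>y\<in>{\<nu> + \<alpha> *\<^sub>R \<pi> | \<alpha>. a \<le> \<alpha> \<and> \<alpha> \<le> b}. x \<noteq> y"
    by fastforce
qed

lemma unclipped_sat0_solutions_eq_segment:
  assumes st: "stochastic P" and irr: "irreducible_mat P" and w: "\<forall>i. w $ i \<ge> 0"
    and inv: "\<pi> = transpose P *v \<pi>" and pos: "\<forall>i. \<pi> $ i > 0"
    and zero_sum: "(\<Sum>i\<in>UNIV. c $ i) = 0"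
  shows "{x. x = sat0 w (transpose P *v x + c) \<and> x = transpose P *v x + c} =
    {nu_vec P c + \<alpha> *\<^sub>R \<pi> | \<alpha>. - (MIN i. nu_vec P c $ i / \<pi> $ i) \<le> \<alpha> \<and>
                                  \<alpha> \<le> (MIN i. (w $ i - nu_vec P c $ i) / \<pi> $ i)}"
proof -
  let ?\<nu> = "nu_vec P c"
  have "x = sat0 w (transpose P *v x + c) \<and> x = transpose P *v x + c \<longleftrightarrow>
      (\<exists>\<alpha>. x = ?\<nu> + \<alpha> *\<^sub>R \<pi> \<and> - (MIN i. ?\<nu> $ i / \<pi> $ i) \<le> \<alpha> \<and>
                                  \<alpha> \<le> (MIN i. (w $ i - ?\<nu> $ i) / \<pi> $ i))" for x
  proof -
    have "x = sat0 w (transpose P *v x + c) \<and> x = transpose P *v x + c \<longleftrightarrow>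
        sat0 w x = x \<and> (\<exists>\<alpha>. x = ?\<nu> + \<alpha> *\<^sub>R \<pi>)"
      using solves_linear_iff_on_line[OF st irr inv pos zero_sum] by metis
    also have "\<dots> \<longleftrightarrow> (\<exists>\<alpha>. x = ?\<nu> + \<alpha> *\<^sub>R \<pi> \<and> sat0 w (?\<nu> + \<alpha> *\<^sub>R \<pi>) = ?\<nu> + \<alpha> *\<^sub>R \<pi>)"
      by blast
    finally show ?thesis by (simp only: sat0_eq_self_iff[OF w] ray_in_box_iff[OF pos])
  qed
  then show ?thesis by blast
qed

theorem proposition4:
  fixes P :: "real^'n^'n" and w c \<pi> :: "real^'n"
  assumes "stochastic P" and "irreducible_mat P"
    and "\<forall>i. w $ i \<ge> 0"
    and "\<pi> = transpose P *v \<pi>" and "\<forall>i. \<pi> $ i \<ge> 0" and "(\<Sum>i\<in>UNIV. \<pi> $ i) = 1"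
  defines "X \<equiv> {x. x = sat0 w (transpose P *v x + c)}"
    and "\<nu> \<equiv> nu_vec P c"
  shows "((\<exists>x\<in>X. \<exists>y\<in>X. x \<noteq> y) \<longleftrightarrow>
           (\<Sum>i\<in>UNIV. c $ i) = 0 \<and>
           (MIN i. \<nu> $ i / \<pi> $ i) + (MIN i. (w $ i - \<nu> $ i) / \<pi> $ i) > 0)
       \<and> ((\<exists>x\<in>X. \<exists>y\<in>X. x \<noteq> y) \<longrightarrow>
           X = {\<nu> + \<alpha> *\<^sub>R \<pi> | \<alpha>. - (MIN i. \<nu> $ i / \<pi> $ i) \<le> \<alpha> \<and>
                                      \<alpha> \<le> (MIN i. (w $ i - \<nu> $ i) / \<pi> $ i)})"
proof -
  note st = assms(1) and irr = assms(2) and w = assms(3) and inv = assms(4)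
  have pos: "\<forall>i. \<pi> $ i > 0" using invariant_distribution_pos[OF st irr inv assms(5,6)] by blast
  define S where "S = {\<nu> + \<alpha> *\<^sub>R \<pi> | \<alpha>. - (MIN i. \<nu> $ i / \<pi> $ i) \<le> \<alpha> \<and>
                                          \<alpha> \<le> (MIN i. (w $ i - \<nu> $ i) / \<pi> $ i)}"
  have segment: "{x. x = sat0 w (transpose P *v x + c) \<and> x = transpose P *v x + c} = S"
    if "(\<Sum>i\<in>UNIV. c $ i) = 0"
    unfolding S_def \<nu>_def by (rule unclipped_sat0_solutions_eq_segment[OF st irr w inv pos that])
  have X_eq_S: "(\<Sum>i\<in>UNIV. c $ i) = 0 \<and> X = S" if "x \<in> X" "y \<in> X" "x \<noteq> y" for x y
  proof -
    have unclipped: "z = transpose P *v z + c" if "z \<in> X" for z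
      using sat0_distinct_solutions_unclipped[OF st irr w inv pos]
        \<open>z \<in> X\<close> \<open>x \<in> X\<close> \<open>y \<in> X\<close> \<open>x \<noteq> y\<close>
      unfolding X_def by (cases "z = x") auto
    then have "(\<Sum>i\<in>UNIV. c $ i) = 0" using sum_zero_if_solves_linear[OF st] \<open>x \<in> X\<close> by blast
    with segment unclipped show ?thesis unfolding X_def by blast
  qed
  have "\<pi> \<noteq> 0" using pos by (metis less_irrefl zero_index)
  have S_nontrivial: "(\<exists>x\<in>S. \<exists>y\<in>S. x \<noteq> y) \<longleftrightarrow>
      (MIN i. \<nu> $ i / \<pi> $ i) + (MIN i. (w $ i - \<nu> $ i) / \<pi> $ i) > 0"
    unfolding S_def segment_nontrivial_iff[OF \<open>\<pi> \<noteq> 0\<close>] by linarith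
  show ?thesis
    unfolding S_def[symmetric] using X_eq_S segment S_nontrivial unfolding X_def by blast
qed

end
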